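(* Let $J=\{q_1,\dots,q_n\}$ be a finite set of odd primes with $3\notin J$. For each $i$ fix $m_i\in\mathbb{N}$ and $e_i\in\{0,1\}$. Then at most $$\sum_{i=1}^n\frac{\phi(q_i^{m_i})}{2}+3$$ of the numbers in the set $$\{H_1\}\cup\{H_{a/(2^{e_i}q_i^{m_i})}:\ 1\le i\le n,\ 1\le a\le 2^{e_i}q_i^{m_i}-1\}$$ are linearly independent over $\overline{\mathbb{Q}}$.
   Context: $\phi$ is Euler's totient function and $\overline{\mathbb{Q}}$ is the field of algebraic numbers. For a complex number $r$ which is not a negative integer, $H_r=r\sum_{k=1}^{\infty}\frac{1}{k(r+k)}$; for integers $Q>1$ and $1\le a\le Q$ it satisfies Gauss's formula $H_{a/Q}=\frac Qa-\log(2Q)-\frac{\pi}{2}\cot(\pi a/Q)+2\sum_{k=1}^{\lfloor (Q-1)/2\rfloor}\cos(2\pi k a/Q)\log\sin(\pi k/Q)$. *)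

theory Defs
  imports Complex_Main "HOL-Computational_Algebra.Polynomial" "HOL-Number_Theory.Totient"
begin

definition harm :: "complex \<Rightarrow> complex" where
  "harm r = r * (\<Sum>k. 1 / (of_nat (Suc k) * (r + of_nat (Suc k))))"

definition alg_lin_indep :: "complex set \<Rightarrow> bool" where
  "alg_lin_indep S \<longleftrightarrow> finite S \<and>
     (\<forall>c. (\<forall>x\<in>S. algebraic (c x)) \<longrightarrow> (\<Sum>x\<in>S. c x * x) = 0 \<longrightarrow> (\<forall>x\<in>S. c x = 0))"

end

theory Submission
  imports Defs "HOL-Analysis.Gamma_Function"
begin

text \<open>
  Write \<open>\<psi>\<^sub>\<gamma>(r) = \<psi>(r) + \<gamma>\<close>, so that \<open>H\<^sub>r = \<psi>\<^sub>\<gamma>(r) + 1/r\<close>, and let \<open>N\<close> be four times the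
  product of the prime powers \<open>q\<^sup>m\<close>. The reflection formula
  \<open>\<psi>\<^sub>\<gamma>(1 - x) = \<psi>\<^sub>\<gamma>(x) + \<pi> cot(\<pi> x)\<close>, Gauss's multiplication formula and
  \<open>\<psi>\<^sub>\<gamma>(1/2) = -2 log 2\<close> show that every number of the set lies in the \<open>\<rat>(\<zeta>\<^sub>N)\<close>-span of
  \<open>1, \<pi>, log 2\<close> and of the values \<open>\<psi>\<^sub>\<gamma>(a/q\<^sup>m)\<close> with \<open>a < q\<^sup>m/2\<close> coprime to \<open>q\<close>; here one
  uses that \<open>cot(\<pi> a/b)\<close> lies in \<open>\<rat>(\<zeta>\<^sub>N)\<close> whenever \<open>b\<close> divides \<open>N\<close>. For each \<open>q\<close> there
  are at most \<open>\<phi>(q\<^sup>m)/2\<close> such values. Since \<open>\<rat>(\<zeta>\<^sub>N)\<close> consists of algebraic numbers,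
  a subset of this span that is linearly independent over the algebraic numbers is
  no larger than the spanning set.
\<close>

hide_const (open) Harmonic_Numbers.harm

section \<open>Homogeneous linear systems over a subring\<close>

lemma homogeneous_system_nontrivial_solution:
  fixes P :: "'a::idom \<Rightarrow> bool" and A :: "'i \<Rightarrow> 'k \<Rightarrow> 'a"
  assumes P0: "P 0" and P1: "P 1" and P_add: "\<And>x y. P x \<Longrightarrow> P y \<Longrightarrow> P (x + y)"
    and P_mult: "\<And>x y. P x \<Longrightarrow> P y \<Longrightarrow> P (x * y)" and P_uminus: "\<And>x. P x \<Longrightarrow> P (- x)"
  shows "finite I \<Longrightarrow> finite K \<Longrightarrow> card I < card K \<Longrightarrow> (\<forall>i\<in>I. \<forall>k\<in>K. P (A i k)) \<Longrightarrow>
     \<exists>x. (\<forall>k\<in>K. P (x k)) \<and> (\<exists>k\<in>K. x k \<noteq> 0) \<and> (\<forall>i\<in>I. (\<Sum>k\<in>K. A i k * x k) = 0)"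
proof (induction I arbitrary: K A rule: finite_induct)
  case empty
  then obtain k0 where "k0 \<in> K" by fastforce
  then show ?case
    by (intro exI[of _ "\<lambda>k. if k = k0 then 1 else 0"]) (auto simp: P0 P1)
next
  case (insert i0 I K A)
  have P_sum: "P (\<Sum>k\<in>F. f k)" if "finite F" "\<forall>k\<in>F. P (f k)" for F and f :: "'k \<Rightarrow> 'a"
    using that by (induction F rule: finite_induct) (auto simp: P0 P_add)
  show ?case
  proof (cases "\<forall>k\<in>K. A i0 k = 0")
    case True
    have "card I < card K" using insert by simp
    with insert.IH[of K A] insert.prems obtain x where
      "\<forall>k\<in>K. P (x k)" "\<exists>k\<in>K. x k \<noteq> 0" "\<forall>i\<in>I. (\<Sum>k\<in>K. A i k * x k) = 0" by auto
    then show ?thesis using True by (intro exI[of _ x]) auto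
  next
    case False
    then obtain j where j: "j \<in> K" "A i0 j \<noteq> 0" by auto
    text \<open>Gaussian elimination of the unknown \<open>x j\<close> using the equation \<open>i0\<close>.\<close>
    define K' where "K' = K - {j}"
    define A' where "A' i k = A i0 j * A i k - A i j * A i0 k" for i k
    have fin_K': "finite K'" using insert.prems K'_def by auto
    have card_K': "card I < card K'" using insert.prems insert.hyps j unfolding K'_def
      by (simp add: card_Diff_singleton)
    have P_A': "\<forall>i\<in>I. \<forall>k\<in>K'. P (A' i k)"
    proof (intro ballI)
      fix i k assume "i \<in> I" "k \<in> K'"
      then have "P (A i0 j * A i k + - (A i j * A i0 k))"
        using insert.prems j unfolding K'_def by (intro P_add P_uminus P_mult) auto
      then show "P (A' i k)" unfolding A'_def by simp
    qed
    from insert.IH[OF fin_K' card_K' P_A'] obtain y where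
      y: "\<forall>k\<in>K'. P (y k)" "\<exists>k\<in>K'. y k \<noteq> 0" "\<forall>i\<in>I. (\<Sum>k\<in>K'. A' i k * y k) = 0" by blast
    define x where "x k = (if k = j then - (\<Sum>k\<in>K'. A i0 k * y k) else A i0 j * y k)" for k
    have sum_K: "(\<Sum>k\<in>K. f k) = f j + (\<Sum>k\<in>K'. f k)" for f :: "'k \<Rightarrow> 'a"
      using j insert.prems unfolding K'_def by (simp add: sum.remove)
    have x_K': "\<And>k. k \<in> K' \<Longrightarrow> x k = A i0 j * y k" unfolding x_def K'_def by auto
    have "\<forall>k\<in>K. P (x k)"
      using insert.prems y(1) fin_K' j unfolding x_def K'_def
      by (auto intro!: P_uminus P_sum P_mult)
    moreover have "\<exists>k\<in>K. x k \<noteq> 0"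
    proof -
      from y(2) obtain k where k: "k \<in> K'" "y k \<noteq> 0" by blast
      then have "x k \<noteq> 0" using x_K' j by simp
      then show ?thesis using k unfolding K'_def by blast
    qed
    moreover have "\<forall>i\<in>insert i0 I. (\<Sum>k\<in>K. A i k * x k) = 0"
    proof
      fix i assume i: "i \<in> insert i0 I"
      have "(\<Sum>k\<in>K. A i k * x k) = A i j * x j + (\<Sum>k\<in>K'. A i k * (A i0 j * y k))"
        by (simp add: sum_K x_K')
      also have "\<dots> = (\<Sum>k\<in>K'. A' i k * y k)"
        unfolding x_def A'_def by (simp add: sum_distrib_left sum_subtractf algebra_simps)
      finally show "(\<Sum>k\<in>K. A i k * x k) = 0"
        using i y(3) by (cases "i = i0") (auto simp: A'_def)
    qed
    ultimately show ?thesis by blast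
  qed
qed

section \<open>The cyclotomic field \<open>\<rat>(\<zeta>\<^sub>N)\<close>\<close>

definition zeta :: "nat \<Rightarrow> complex" where
  "zeta N = exp (2 * of_real pi * \<i> / of_nat N)"

definition cyclotomic_field :: "nat \<Rightarrow> complex set" where
  "cyclotomic_field N = {x. \<exists>r. (\<forall>k. r k \<in> \<rat>) \<and> x = (\<Sum>k<N. r k * zeta N ^ k)}"

lemma zeta_power: "zeta N ^ n = exp (of_nat n * (2 * of_real pi * \<i> / of_nat N))"
  unfolding zeta_def by (rule exp_of_nat_mult[symmetric])

lemma zeta_power_self: "N > 0 \<Longrightarrow> zeta N ^ N = 1"
  unfolding zeta_power by simp

lemma zeta_power_mod: assumes "N > 0" shows "zeta N ^ n = zeta N ^ (n mod N)"
proof -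
  have "zeta N ^ n = zeta N ^ (N * (n div N) + n mod N)" by simp
  also have "\<dots> = (zeta N ^ N) ^ (n div N) * zeta N ^ (n mod N)"
    by (simp only: power_add power_mult)
  finally show ?thesis using zeta_power_self[OF assms] by simp
qed

lemma zeta_power_divisor:
  assumes "b dvd N" "N > 0"
  shows "zeta N ^ (a * (N div b)) = exp (2 * of_real pi * \<i> * of_nat a / of_nat b)"
proof -
  obtain c where c: "N = b * c" using assms(1) by auto
  with assms have "b > 0" "c > 0" "N div b = c" by auto
  then show ?thesis unfolding zeta_power using c by (simp add: field_simps)
qed

lemma zeta_power_in_cyclotomic_field:
  assumes "N > 0" shows "zeta N ^ n \<in> cyclotomic_field N"
proof -
  have delta: "(\<lambda>k. (if k = n mod N then 1 else 0) * zeta N ^ k) =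
      (\<lambda>k. if k = n mod N then zeta N ^ k else 0)"
    by auto
  have "(\<Sum>k<N. (if k = n mod N then 1 else 0) * zeta N ^ k) = zeta N ^ (n mod N)"
    unfolding delta using assms by (simp add: sum.delta)
  then show ?thesis unfolding cyclotomic_field_def using zeta_power_mod[OF assms, of n]
    by (intro CollectI exI[of _ "\<lambda>k. if k = n mod N then 1 else 0"]) auto
qed

lemma cyclotomic_field_add:
  "x \<in> cyclotomic_field N \<Longrightarrow> y \<in> cyclotomic_field N \<Longrightarrow> x + y \<in> cyclotomic_field N"
proof -
  assume "x \<in> cyclotomic_field N" "y \<in> cyclotomic_field N"
  then obtain r s where "\<forall>k. r k \<in> \<rat>" "x = (\<Sum>k<N. r k * zeta N ^ k)"
     "\<forall>k. s k \<in> \<rat>" "y = (\<Sum>k<N. s k * zeta N ^ k)" unfolding cyclotomic_field_def by auto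
  then show ?thesis unfolding cyclotomic_field_def
    by (intro CollectI exI[of _ "\<lambda>k. r k + s k"]) (auto simp: sum.distrib algebra_simps)
qed

lemma cyclotomic_field_Rats_mult:
  "c \<in> \<rat> \<Longrightarrow> x \<in> cyclotomic_field N \<Longrightarrow> c * x \<in> cyclotomic_field N"
proof -
  assume c: "c \<in> \<rat>" "x \<in> cyclotomic_field N"
  then obtain r where "\<forall>k. r k \<in> \<rat>" "x = (\<Sum>k<N. r k * zeta N ^ k)"
    unfolding cyclotomic_field_def by auto
  then show ?thesis unfolding cyclotomic_field_def using c
    by (intro CollectI exI[of _ "\<lambda>k. c * r k"]) (auto simp: sum_distrib_left algebra_simps)
qed

lemma zero_in_cyclotomic_field: "0 \<in> cyclotomic_field N"
  unfolding cyclotomic_field_def by (intro CollectI exI[of _ "\<lambda>k. 0"]) auto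

lemma sum_in_cyclotomic_field:
  "(\<And>i. i \<in> A \<Longrightarrow> f i \<in> cyclotomic_field N) \<Longrightarrow> sum f A \<in> cyclotomic_field N"
  by (induction A rule: infinite_finite_induct)
    (auto intro: zero_in_cyclotomic_field cyclotomic_field_add)

lemma Rats_in_cyclotomic_field: "N > 0 \<Longrightarrow> c \<in> \<rat> \<Longrightarrow> c \<in> cyclotomic_field N"
  using cyclotomic_field_Rats_mult[of c "zeta N ^ 0" N] zeta_power_in_cyclotomic_field[of N 0]
  by simp

lemma cyclotomic_field_uminus: "x \<in> cyclotomic_field N \<Longrightarrow> - x \<in> cyclotomic_field N"
  using cyclotomic_field_Rats_mult[of "-1" x N] by simp

lemma cyclotomic_field_mult:
  assumes "N > 0" "x \<in> cyclotomic_field N" "y \<in> cyclotomic_field N"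
  shows "x * y \<in> cyclotomic_field N"
proof -
  obtain r s where rs: "\<forall>k. r k \<in> \<rat>" "x = (\<Sum>k<N. r k * zeta N ^ k)"
     "\<forall>k. s k \<in> \<rat>" "y = (\<Sum>k<N. s k * zeta N ^ k)"
    using assms unfolding cyclotomic_field_def by auto
  have "x * y = (\<Sum>k<N. \<Sum>l<N. (r k * s l) * zeta N ^ (k + l))"
    unfolding rs by (simp add: sum_product power_add algebra_simps)
  also have "\<dots> \<in> cyclotomic_field N"
    using rs
    by (intro sum_in_cyclotomic_field cyclotomic_field_Rats_mult zeta_power_in_cyclotomic_field
        assms) auto
  finally show ?thesis .
qed

lemma cyclotomic_field_power: "N > 0 \<Longrightarrow> x \<in> cyclotomic_field N \<Longrightarrow> x ^ n \<in> cyclotomic_field N"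
  by (induction n) (auto intro: cyclotomic_field_mult Rats_in_cyclotomic_field)

text \<open>
  The powers \<open>1, x, \<dots>, x\<^sup>N\<close> are \<open>N + 1\<close> vectors in the \<open>\<rat>\<close>-span of \<open>N\<close> numbers,
  so a nontrivial rational relation between them is a polynomial annihilating \<open>x\<close>.
\<close>
lemma algebraic_if_in_cyclotomic_field:
  assumes N: "N > 0" and x: "x \<in> cyclotomic_field N"
  shows "algebraic x"
proof -
  have "\<forall>k. \<exists>c. (\<forall>j. c j \<in> \<rat>) \<and> x ^ k = (\<Sum>j<N. c j * zeta N ^ j)"
    using cyclotomic_field_power[OF N x] unfolding cyclotomic_field_def by blast
  then obtain c where c: "\<And>k j. c k j \<in> \<rat>" "\<And>k. x ^ k = (\<Sum>j<N. c k j * zeta N ^ j)"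
    by metis
  have "\<exists>d. (\<forall>k\<in>{..N}. d k \<in> \<rat>) \<and> (\<exists>k\<in>{..N}. d k \<noteq> 0) \<and>
      (\<forall>j\<in>{..<N}. (\<Sum>k\<in>{..N}. c k j * d k) = 0)"
    by (rule homogeneous_system_nontrivial_solution[where P = "\<lambda>x. x \<in> \<rat>"]) (auto simp: c(1))
  then obtain d where d: "\<And>k. k \<le> N \<Longrightarrow> d k \<in> \<rat>" "\<exists>k\<le>N. d k \<noteq> 0"
      "\<And>j. j < N \<Longrightarrow> (\<Sum>k\<le>N. c k j * d k) = 0" by auto
  define p where "p = (\<Sum>k\<le>N. monom (d k) k)"
  have coeff_p: "coeff p i = (if i \<le> N then d i else 0)" for i
    unfolding p_def by (simp add: coeff_sum coeff_monom)
  have "poly p x = (\<Sum>k\<le>N. \<Sum>j<N. d k * c k j * zeta N ^ j)"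
    unfolding p_def by (simp add: poly_sum poly_monom c(2) sum_distrib_left mult.assoc)
  also have "\<dots> = (\<Sum>j<N. \<Sum>k\<le>N. d k * c k j * zeta N ^ j)"
    by (rule sum.swap)
  also have "\<dots> = (\<Sum>j<N. (\<Sum>k\<le>N. c k j * d k) * zeta N ^ j)"
    unfolding sum_distrib_right by (simp add: mult_ac)
  also have "\<dots> = 0" using d(3) by simp
  finally have "poly p x = 0" .
  moreover have "p \<noteq> 0" using d(2) coeff_p by (metis coeff_0)
  moreover have "\<forall>i. coeff p i \<in> \<rat>" using coeff_p d(1) by simp
  ultimately show ?thesis by (intro algebraicI'[of p]) auto
qed

lemma inverse_root_of_unity_minus_one:
  fixes w :: complex
  assumes "w ^ N = 1" "w \<noteq> 1" "N > 0"
  shows "1 / (w - 1) = (1 / of_nat N) * (\<Sum>j<N. of_nat j * w ^ j)"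
proof -
  have telescope: "(w - 1) * (\<Sum>j<n. of_nat j * w ^ j) = of_nat n * w ^ n - (\<Sum>j<n. w ^ Suc j)" for n
    by (induction n) (simp_all add: algebra_simps)
  have "(\<Sum>j<N. w ^ j) = 0" using assms by (simp add: sum_gp_strict)
  then have "(\<Sum>j<N. w ^ Suc j) = 0" by (simp add: sum_distrib_left[symmetric])
  with telescope[of N] assms have "(w - 1) * (\<Sum>j<N. of_nat j * w ^ j) = of_nat N" by simp
  with assms show ?thesis by (simp add: field_simps)
qed

lemma ii_in_cyclotomic_field:
  assumes "4 dvd N" "N > 0" shows "\<i> \<in> cyclotomic_field N"
proof -
  have "zeta N ^ (1 * (N div 4)) = exp (2 * of_real pi * \<i> * of_nat 1 / of_nat 4)"
    by (rule zeta_power_divisor[OF assms])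
  also have "\<dots> = cis (pi / 2)" by (simp add: cis_conv_exp mult_ac)
  also have "\<dots> = \<i>" by (simp add: cis.code complex_eq_iff)
  finally show ?thesis using zeta_power_in_cyclotomic_field[OF assms(2), of "1 * (N div 4)"] by simp
qed

text \<open>With \<open>w = e\<^sup>2\<^sup>\<pi>\<^sup>i\<^sup>a\<^sup>/\<^sup>b\<close>, a power of \<open>\<zeta>\<^sub>N\<close>, one has \<open>cot(\<pi>a/b) = i(w + 1)/(w - 1)\<close>.\<close>
lemma cot_in_cyclotomic_field:
  assumes N: "N > 0" "b dvd N" "4 dvd N" and ab: "0 < a" "a < b"
  shows "cot (of_real pi * of_nat a / of_nat b) \<in> cyclotomic_field N"
proof -
  define \<theta> where "\<theta> = of_real pi * of_nat a / (of_nat b :: complex)"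
  define u where "u = exp (\<i> * \<theta>)"
  define w where "w = zeta N ^ (a * (N div b))"
  have w_u: "w = u ^ 2" unfolding w_def u_def \<theta>_def zeta_power_divisor[OF N(2,1)]
    by (simp add: exp_of_nat_mult[symmetric] mult_ac)
  have u0: "u \<noteq> 0" unfolding u_def by simp
  have "\<theta> = of_real (pi * a / b)" unfolding \<theta>_def by simp
  moreover have "sin (pi * a / b) > 0"
    using ab by (intro sin_gt_zero) (auto simp: field_simps)
  ultimately have sin_nz: "sin \<theta> \<noteq> 0" by (metis less_irrefl of_real_0 of_real_eq_iff sin_of_real)
  have sin_u: "sin \<theta> = (u - inverse u) / (2 * \<i>)"
    unfolding u_def sin_exp_eq by (simp add: exp_minus)
  have cos_u: "cos \<theta> = (u + inverse u) / 2"
    unfolding u_def cos_exp_eq by (simp add: exp_minus)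
  have w1: "w \<noteq> 1"
  proof
    assume "w = 1"
    then have "u - inverse u = 0" using w_u u0 by (simp add: field_simps power2_eq_square)
    then show False using sin_nz sin_u by simp
  qed
  have "cot \<theta> = \<i> * (w + 1) * (1 / (w - 1))"
    unfolding cot_def sin_u cos_u w_u using u0 w1 w_u
    by (simp add: field_simps power2_eq_square)
  moreover have w_in: "w \<in> cyclotomic_field N" unfolding w_def by (rule zeta_power_in_cyclotomic_field[OF N(1)])
  moreover have "1 / (w - 1) \<in> cyclotomic_field N"
  proof -
    have "w ^ N = 1" unfolding w_def
      by (metis zeta_power_self[OF N(1)] power_mult power_mult_distrib mult.commute power_one)
    then have "1 / (w - 1) = (1 / of_nat N) * (\<Sum>j<N. of_nat j * w ^ j)"
      by (rule inverse_root_of_unity_minus_one[OF _ w1 N(1)])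
    also have "\<dots> \<in> cyclotomic_field N"
      unfolding w_def
      by (intro cyclotomic_field_Rats_mult sum_in_cyclotomic_field)
        (auto simp: power_mult[symmetric] zeta_power_in_cyclotomic_field N)
    finally show ?thesis .
  qed
  ultimately show ?thesis unfolding \<theta>_def
    by (metis N(1,3) Rats_1 Rats_in_cyclotomic_field cyclotomic_field_add cyclotomic_field_mult
        ii_in_cyclotomic_field)
qed

section \<open>Reflection and multiplication formulas for the digamma function\<close>

lemma Digamma_reflection:
  fixes z :: complex assumes z: "z \<notin> \<int>"
  shows "Digamma (1 - z) = Digamma z + of_real pi * cot (of_real pi * z)"
proof -
  define g where "g t = Gamma t * Gamma (1 - t) * sin (of_real pi * t)" for t :: complex
  have z1: "1 - z \<notin> \<int>" using z Ints_diff[of 1 "1 - z"] by auto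
  have nz: "z \<notin> \<int>\<^sub>\<le>\<^sub>0" "1 - z \<notin> \<int>\<^sub>\<le>\<^sub>0" using z z1 nonpos_Ints_subset_Ints by auto
  have sin_nz: "sin (of_real pi * t) \<noteq> 0" if "t \<notin> \<int>" for t :: complex
  proof
    assume "sin (of_real pi * t) = 0"
    then obtain n :: int where "of_real pi * t = of_real (of_int n * pi)" by (auto simp: sin_eq_0)
    then have "t = of_int n" by (simp add: field_simps)
    then show False using that by auto
  qed
  text \<open>Differentiate the reflection formula \<open>g = \<pi>\<close> of the Gamma function.\<close>
  have D: "(g has_field_derivative (Gamma z * Gamma (1 - z) * ((Digamma z - Digamma (1 - z)) *
      sin (of_real pi * z) + of_real pi * cos (of_real pi * z)))) (at z)"
    unfolding g_def using nz
    by (auto intro!: derivative_eq_intros simp: algebra_simps)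
  have "eventually (\<lambda>t. t \<in> UNIV - \<int>) (nhds z)"
    using z by (intro eventually_nhds_in_open) (auto simp: open_Diff)
  then have "eventually (\<lambda>t. g t = of_real pi) (nhds z)"
    by eventually_elim (use Gamma_reflection_complex sin_nz in \<open>auto simp: g_def field_simps\<close>)
  then have "(g has_field_derivative 0) (at z)"
    by (subst DERIV_cong_ev[OF refl _ refl]) (auto intro: DERIV_const)
  with D have "Gamma z * Gamma (1 - z) * ((Digamma z - Digamma (1 - z)) *
      sin (of_real pi * z) + of_real pi * cos (of_real pi * z)) = 0"
    using DERIV_unique by blast
  moreover have "Gamma z \<noteq> 0" "Gamma (1 - z) \<noteq> 0" using nz by (auto simp: Gamma_eq_zero_iff)
  ultimately have "(Digamma z - Digamma (1 - z)) * sin (of_real pi * z) +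
      of_real pi * cos (of_real pi * z) = 0"
    by simp
  then show ?thesis using sin_nz[OF z] unfolding cot_def by (simp add: field_simps)
qed

lemma sum_lessThan_mult_split:
  fixes g :: "nat \<Rightarrow> 'a::comm_monoid_add"
  shows "(\<Sum>l<n * m. g l) = (\<Sum>k<m. \<Sum>i<n. g (n * k + i))"
proof (induction m)
  case (Suc m)
  have "(\<Sum>l<a + b. g l) = (\<Sum>l<a. g l) + (\<Sum>i<b. g (a + i))" for a b
    by (induction b) (simp_all add: add_ac)
  from this[of "n * m" n] Suc show ?case by (simp add: add.commute)
qed simp

text \<open>
  Gauss's multiplication formula, from the limit \<open>\<psi>(z) = lim (ln m - \<Sum>\<^sub>k\<^sub><\<^sub>m 1/(z + k))\<close>
  taken along \<open>m\<close> and along \<open>n m\<close>.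
\<close>
lemma Digamma_multiplication:
  fixes r :: real assumes r: "r > 0" and n: "n > 0"
  shows "(\<Sum>i<n. Digamma (of_real r + of_nat i / of_nat n :: complex)) =
         of_nat n * Digamma (of_nat n * of_real r) - of_nat n * of_real (ln (real n))"
proof -
  define f where "f m = (\<Sum>i<n. of_real (ln (real m)) -
       (\<Sum>k<m. inverse (of_real r + of_nat i / of_nat n + of_nat k :: complex)))" for m
  define h where "h m = of_real (ln (real m)) -
       (\<Sum>l<m. inverse (of_nat n * of_real r + of_nat l :: complex))" for m
  have pos: "Re (of_real r + of_nat i / of_nat n + of_nat k :: complex) > 0" for i k
  proof -
    have "r + real i / real n + real k > 0" using r by (intro add_pos_nonneg) auto
    then show ?thesis by simp
  qed
  then have nz: "(of_real r + of_nat i / of_nat n + of_nat k :: complex) \<noteq> 0" for i k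
    by (metis less_irrefl zero_complex.sel(1))
  have lim_f: "f \<longlonglongrightarrow> (\<Sum>i<n. Digamma (of_real r + of_nat i / of_nat n :: complex))"
    unfolding f_def by (intro tendsto_sum Digamma_LIMSEQ) (use nz[of _ 0] in simp)
  have "h \<longlonglongrightarrow> Digamma (of_nat n * of_real r :: complex)"
    unfolding h_def by (rule Digamma_LIMSEQ) (use r n in simp)
  moreover have "strict_mono (\<lambda>m. n * m)" using n by (intro strict_monoI) simp
  ultimately have "(\<lambda>m. h (n * m)) \<longlonglongrightarrow> Digamma (of_nat n * of_real r :: complex)"
    by (rule LIMSEQ_subseq_LIMSEQ[unfolded o_def])
  then have lim_h: "(\<lambda>m. of_nat n * h (n * m) - of_nat n * of_real (ln (real n))) \<longlonglongrightarrow>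
      of_nat n * Digamma (of_nat n * of_real r) - of_nat n * of_real (ln (real n))"
    by (intro tendsto_intros)
  have "eventually (\<lambda>m. of_nat n * h (n * m) - of_nat n * of_real (ln (real n)) = f m) sequentially"
    using eventually_gt_at_top[of 0]
  proof eventually_elim
    case (elim m)
    have inv: "inverse (of_real r + of_nat i / of_nat n + of_nat k :: complex) =
        of_nat n * inverse (of_nat n * of_real r + of_nat (n * k + i))" for i k
    proof -
      have "(of_nat n * of_real r + of_nat (n * k + i) :: complex) =
            of_nat n * (of_real r + of_nat i / of_nat n + of_nat k)" using n by (simp add: field_simps)
      then show ?thesis using nz[of i k] n by (simp add: field_simps)
    qed
    have "f m = of_nat n * of_real (ln (real m)) -
        of_nat n * (\<Sum>k<m. \<Sum>i<n. inverse (of_nat n * of_real r + of_nat (n * k + i) :: complex))"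
      unfolding f_def inv by (subst sum.swap) (simp add: sum_subtractf sum_distrib_left)
    also have "(\<Sum>k<m. \<Sum>i<n. inverse (of_nat n * of_real r + of_nat (n * k + i) :: complex)) =
        (\<Sum>l<n * m. inverse (of_nat n * of_real r + of_nat l :: complex))"
      by (rule sum_lessThan_mult_split[symmetric])
    also have "of_real (ln (real m)) = (of_real (ln (real (n * m))) - of_real (ln (real n)) :: complex)"
      using elim n by (simp add: ln_mult)
    finally show ?case unfolding h_def by (simp add: algebra_simps)
  qed
  from Lim_transform_eventually[OF lim_h this] lim_f show ?thesis
    using LIMSEQ_unique by metis
qed

section \<open>The function \<open>\<psi>(r) + \<gamma>\<close>\<close>

definition psi_gamma :: "real \<Rightarrow> complex" where
  "psi_gamma r = Digamma (complex_of_real r) + euler_mascheroni"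

lemma harm_eq_psi_gamma:
  assumes r: "r > 0" shows "harm (of_real r) = psi_gamma r + of_real (1 / r)"
proof -
  define x where "x = (of_real r :: complex)"
  have x0: "x \<noteq> 0" using r unfolding x_def by simp
  have nz: "x + of_nat (Suc k) \<noteq> 0" for k
  proof
    assume "x + of_nat (Suc k) = 0"
    then have "Re (x + of_nat (Suc k)) = 0" by simp
    then show False using r unfolding x_def by simp
  qed
  define h where "h k = inverse (of_nat (Suc k)) - inverse (x + 1 + of_nat k)" for k
  have summable: "summable h" unfolding h_def using summable_Digamma[of "x + 1"] nz[of 0] by simp
  have sum_h: "suminf h = Digamma (x + 1) + euler_mascheroni"
    unfolding h_def Digamma_def by simp
  have terms: "1 / (of_nat (Suc k) * (x + of_nat (Suc k))) = h k / x" for k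
  proof -
    define a where "a = (of_nat (Suc k) :: complex)"
    have a: "a \<noteq> 0" "x + a \<noteq> 0" using nz[of k] unfolding a_def by (simp only: of_nat_neq_0)+
    have "h k = inverse a - inverse (x + a)" unfolding h_def a_def by simp
    also have "\<dots> = x / (a * (x + a))" using a by (simp add: inverse_eq_divide diff_frac_eq)
    finally have "h k / x = 1 / (a * (x + a))" using x0 by simp
    then show ?thesis unfolding a_def by simp
  qed
  have "harm x = x * (\<Sum>k. h k / x)" unfolding Defs.harm_def terms ..
  also have "\<dots> = suminf h" using summable x0 by (simp add: suminf_divide)
  also have "\<dots> = Digamma x + 1 / x + euler_mascheroni" using sum_h Digamma_plus1[OF x0] by simp
  finally show ?thesis unfolding x_def psi_gamma_def by simp
qed

lemma psi_gamma_1: "psi_gamma 1 = 0"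
  unfolding psi_gamma_def by simp

lemma psi_gamma_one_half: "psi_gamma (1/2) = - of_real (2 * ln 2)"
  unfolding psi_gamma_def using Digamma_one_half[where 'a=complex] by simp

lemma psi_gamma_reflection:
  assumes "0 < x" "x < 1"
  shows "psi_gamma (1 - x) = psi_gamma x + of_real pi * cot (of_real pi * of_real x)"
proof -
  have "complex_of_real x \<notin> \<int>"
  proof
    assume "complex_of_real x \<in> \<int>"
    then obtain n :: int where "x = of_int n" by (auto simp: of_real_in_Ints_iff elim: Ints_cases)
    with assms show False by auto
  qed
  from Digamma_reflection[OF this] show ?thesis unfolding psi_gamma_def by simp
qed

lemma psi_gamma_multiplication:
  assumes "r > 0" "n > 0"
  shows "(\<Sum>i<n. psi_gamma (r + real i / real n)) =
    of_nat n * psi_gamma (real n * r) - of_nat n * of_real (ln (real n))"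
proof -
  have "(\<Sum>i<n. psi_gamma (r + real i / real n)) =
     (\<Sum>i<n. Digamma (of_real r + of_nat i / of_nat n :: complex)) + of_nat n * euler_mascheroni"
    unfolding psi_gamma_def by (simp add: sum.distrib)
  then show ?thesis
    unfolding Digamma_multiplication[OF assms] psi_gamma_def by (simp add: algebra_simps)
qed

lemma sum_psi_gamma_fractions:
  assumes n: "n > 0"
  shows "(\<Sum>a\<in>{1..<n}. psi_gamma (real a / real n)) = - of_nat n * of_real (ln (real n))"
proof -
  have "(\<Sum>a\<in>{1..<n}. psi_gamma (real a / real n)) = (\<Sum>a\<in>{1..n}. psi_gamma (real a / real n))"
    using n psi_gamma_1 by (simp add: atLeastLessThanSuc_atLeastAtMost[symmetric] sum.atLeastLessThan_Suc
        del: atLeastLessThanSuc_atLeastAtMost)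
  also have "\<dots> = (\<Sum>i<n. psi_gamma (1 / real n + real i / real n))"
    by (simp add: sum.atLeast1_atMost_eq add_divide_distrib)
  also have "\<dots> = - of_nat n * of_real (ln (real n))"
    using psi_gamma_multiplication[of "1 / real n" n] n psi_gamma_1 by simp
  finally show ?thesis .
qed

lemma coprime_prime_iff_not_dvd: "prime (q::nat) \<Longrightarrow> coprime a q \<longleftrightarrow> \<not> q dvd a"
  by (metis coprime_commute prime_imp_coprime coprime_common_divisor dvd_refl not_prime_unit)

lemma sum_psi_gamma_primitive_fractions:
  assumes q: "prime q" and j: "j \<ge> 1"
  shows "(\<Sum>a\<in>{a\<in>{1..<q^j}. coprime a q}. psi_gamma (real a / real (q ^ j))) =
    - (of_nat j * of_nat (q ^ j) - of_nat (j - 1) * of_nat (q ^ (j - 1))) * of_real (ln (real q))"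
proof -
  have q_pos: "q > 0" using q prime_gt_0_nat by blast
  have qj: "q ^ j = q * q ^ (j - 1)" using j by (metis Suc_diff_le diff_Suc_1 power_Suc)
  define f where "f a = psi_gamma (real a / real (q ^ j))" for a
  have multiples: "{1..<q^j} - {a. coprime a q} = (\<lambda>b. q * b) ` {1..<q^(j-1)}"
    using q_pos
    by (auto simp: coprime_prime_iff_not_dvd[OF q] qj elim!: dvdE intro!: image_eqI)
  have "sum f ({1..<q^j} - {a. coprime a q}) = (\<Sum>b\<in>{1..<q^(j-1)}. f (q * b))"
    unfolding multiples using q_pos by (intro sum.reindex[unfolded o_def]) (auto simp: inj_on_def)
  also have "\<dots> = (\<Sum>b\<in>{1..<q^(j-1)}. psi_gamma (real b / real (q ^ (j - 1))))"
    unfolding f_def using q_pos by (intro sum.cong refl) (simp add: qj)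
  also have "\<dots> = - of_nat (j - 1) * of_nat (q ^ (j - 1)) * of_real (ln (real q))"
    using sum_psi_gamma_fractions[of "q ^ (j - 1)"] q_pos by (simp add: ln_realpow)
  finally have "sum f ({1..<q^j} - {a. coprime a q}) =
      - of_nat (j - 1) * of_nat (q ^ (j - 1)) * of_real (ln (real q))" .
  moreover have "sum f {1..<q^j} = - of_nat j * of_nat (q ^ j) * of_real (ln (real q))"
    unfolding f_def using sum_psi_gamma_fractions[of "q ^ j"] q_pos by (simp add: ln_realpow)
  moreover have "sum f {1..<q^j} = sum f {a\<in>{1..<q^j}. coprime a q} + sum f ({1..<q^j} - {a. coprime a q})"
    by (subst sum.Int_Diff[of _ _ "{a. coprime a q}"]) (auto intro: sum.cong)
  ultimately show ?thesis unfolding f_def by (simp add: algebra_simps)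
qed

section \<open>The values of \<open>\<psi> + \<gamma>\<close> at fractions with denominator dividing \<open>2q\<^sup>m\<close>\<close>

locale psi_gamma_closed =
  fixes N q m :: nat and V :: "complex set"
  assumes N_pos: "N > 0" and four_dvd_N: "4 dvd N" and denom_dvd_N: "2 * q ^ m dvd N"
    and prime_q: "prime q" and odd_q: "odd q"
    and add_in: "\<And>x y. x \<in> V \<Longrightarrow> y \<in> V \<Longrightarrow> x + y \<in> V"
    and mult_in: "\<And>c x. c \<in> cyclotomic_field N \<Longrightarrow> x \<in> V \<Longrightarrow> c * x \<in> V"
    and one_in: "1 \<in> V" and pi_in: "complex_of_real pi \<in> V"
    and ln_2_in: "complex_of_real (ln 2) \<in> V"
    and generator_in: "\<And>a. 1 \<le> a \<Longrightarrow> 2 * a < q ^ m \<Longrightarrow> coprime a q \<Longrightarrow>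
      psi_gamma (real a / real (q ^ m)) \<in> V"
begin

lemma Rats_mult_in: "c \<in> \<rat> \<Longrightarrow> x \<in> V \<Longrightarrow> c * x \<in> V"
  using mult_in Rats_in_cyclotomic_field N_pos by blast

lemma Rats_in: "c \<in> \<rat> \<Longrightarrow> c \<in> V"
  using Rats_mult_in[of c 1] one_in by simp

lemma diff_in: "x \<in> V \<Longrightarrow> y \<in> V \<Longrightarrow> x - y \<in> V"
  using add_in[of x "(-1) * y"] Rats_mult_in[of "-1" y] by simp

lemma sum_in: "(\<And>i. i \<in> A \<Longrightarrow> f i \<in> V) \<Longrightarrow> sum f A \<in> V"
  by (induction A rule: infinite_finite_induct) (auto intro: add_in Rats_in)

lemma q_ge_3: "q \<ge> 3"
  using prime_ge_2_nat[OF prime_q] odd_q by (cases "q = 2") auto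

lemma odd_q_power: "odd (q ^ j)"
  using odd_q by simp

lemma coprime_iff: "coprime a q \<longleftrightarrow> \<not> q dvd a"
  using coprime_prime_iff_not_dvd[OF prime_q] .

lemma reflection_in:
  assumes "0 < a" "a < b" "b dvd N" "psi_gamma (real a / real b) \<in> V"
  shows "psi_gamma (real (b - a) / real b) \<in> V"
proof -
  have "real (b - a) / real b = 1 - real a / real b"
    using assms by (simp add: of_nat_diff field_simps)
  then have "psi_gamma (real (b - a) / real b) =
      psi_gamma (real a / real b) + cot (of_real pi * of_nat a / of_nat b) * of_real pi"
    using psi_gamma_reflection[of "real a / real b"] assms by (simp add: mult.commute)
  also have "\<dots> \<in> V"
    using assms N_pos four_dvd_N by (intro add_in mult_in pi_in cot_in_cyclotomic_field) auto
  finally show ?thesis .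
qed

lemma primitive_fraction_top_in:
  assumes "m \<ge> 1" "1 \<le> b" "b < q ^ m" "coprime b q"
  shows "psi_gamma (real b / real (q ^ m)) \<in> V"
proof (cases "2 * b < q ^ m")
  case True
  then show ?thesis using generator_in assms by blast
next
  case False
  then have b2: "2 * b > q ^ m" using odd_q_power[of m] by (metis dvd_triv_left le_neq_implies_less not_le)
  define a where "a = q ^ m - b"
  have a: "1 \<le> a" "2 * a < q ^ m" "a < q ^ m" "b = q ^ m - a" using b2 assms unfolding a_def by auto
  have "q dvd q ^ m" using assms(1) by (simp add: dvd_power)
  then have "coprime a q" using assms(3,4) dvd_diff_nat[of q "q ^ m" "q ^ m - b"]
    unfolding a_def coprime_iff by auto
  then have "psi_gamma (real a / real (q ^ m)) \<in> V" using generator_in a by blast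
  from reflection_in[OF _ a(3) _ this] show ?thesis
    using a denom_dvd_N dvd_mult_right by (auto simp: a(4))
qed

lemma ln_q_in: assumes m: "m \<ge> 1" shows "of_real (ln (real q)) \<in> V"
proof -
  define c where "c = m * q ^ m - (m - 1) * q ^ (m - 1)"
  have "q ^ (m - 1) < q ^ m"
    using m q_ge_3 by (intro power_strict_increasing) auto
  then have "(m - 1) * q ^ (m - 1) < m * q ^ m"
    using m by (intro le_less_trans[OF mult_le_mono1[OF diff_le_self]]) simp
  then have c_pos: "c > 0" and
    c: "(of_nat m * of_nat (q ^ m) - of_nat (m - 1) * of_nat (q ^ (m - 1)) :: complex) = of_nat c"
    unfolding c_def by (simp_all add: of_nat_diff)
  have "(\<Sum>a\<in>{a\<in>{1..<q^m}. coprime a q}. psi_gamma (real a / real (q ^ m))) \<in> V"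
    by (intro sum_in primitive_fraction_top_in) (use m in auto)
  then have "- of_nat c * of_real (ln (real q)) \<in> V"
    unfolding sum_psi_gamma_primitive_fractions[OF prime_q m, unfolded c] .
  from Rats_mult_in[OF _ this, of "- 1 / of_nat c"] c_pos show ?thesis by simp
qed

text \<open>
  Descending induction on \<open>j\<close>: the multiplication formula with factor \<open>q\<close> expresses
  \<open>q \<psi>\<^sub>\<gamma>(b/q\<^sup>j)\<close> through \<open>log q\<close> and \<open>\<psi>\<^sub>\<gamma>\<close> at primitive fractions with denominator \<open>q\<^sup>j\<^sup>+\<^sup>1\<close>.
\<close>
lemma primitive_fraction_in:
  assumes "1 \<le> j" "j \<le> m"
  shows "\<forall>b. 1 \<le> b \<longrightarrow> b < q ^ j \<longrightarrow> coprime b q \<longrightarrow> psi_gamma (real b / real (q ^ j)) \<in> V"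
  using assms(2)
proof (induction j rule: inc_induct)
  case base
  then show ?case using primitive_fraction_top_in assms by auto
next
  case (step k)
  have k: "k \<ge> 1" using assms(1) step(1) by simp
  show ?case
  proof (intro allI impI)
    fix b assume b: "1 \<le> b" "b < q ^ k" "coprime b q"
    have q_pos: "q > 0" "q ^ k > 0" using q_ge_3 by simp_all
    define r where "r = real b / real (q ^ Suc k)"
    have r_pos: "r > 0" unfolding r_def using b q_pos by simp
    have "real q * r = real b / real (q ^ k)" unfolding r_def using q_pos by simp
    moreover have "r + real i / real q = real (b + i * q ^ k) / real (q ^ Suc k)" for i
      unfolding r_def using q_pos by (simp add: field_simps)
    ultimately have eq: "of_nat q * psi_gamma (real b / real (q ^ k)) =
        (\<Sum>i<q. psi_gamma (real (b + i * q ^ k) / real (q ^ Suc k))) + of_nat q * of_real (ln (real q))"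
      using psi_gamma_multiplication[OF r_pos q_pos(1)] by simp
    have "psi_gamma (real (b + i * q ^ k) / real (q ^ Suc k)) \<in> V" if i: "i < q" for i
    proof -
      have "b + i * q ^ k < Suc i * q ^ k" using b by simp
      also have "\<dots> \<le> q * q ^ k" using i by (intro mult_right_mono) auto
      finally have "b + i * q ^ k < q ^ Suc k" by simp
      moreover have "q dvd i * q ^ k" using k by (simp add: dvd_power)
      then have "coprime (b + i * q ^ k) q"
        using b(3) by (simp add: coprime_iff dvd_add_left_iff)
      ultimately show ?thesis using step.IH[rule_format, of "b + i * q ^ k"] b(1) by simp
    qed
    then have "(1 / of_nat q) * (of_nat q * psi_gamma (real b / real (q ^ k))) \<in> V"
      unfolding eq using step(2)
      by (intro Rats_mult_in add_in sum_in ln_q_in) auto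
    then show "psi_gamma (real b / real (q ^ k)) \<in> V" using q_pos by simp
  qed
qed

lemma fraction_in:
  "j \<le> m \<Longrightarrow> 1 \<le> b \<Longrightarrow> b < q ^ j \<Longrightarrow> psi_gamma (real b / real (q ^ j)) \<in> V"
proof (induction j arbitrary: b)
  case 0
  then show ?case by simp
next
  case (Suc j)
  show ?case
  proof (cases "coprime b q")
    case True
    then show ?thesis using primitive_fraction_in[of "Suc j"] Suc.prems by simp
  next
    case False
    then obtain b' where b: "b = q * b'" using coprime_iff by auto
    with Suc.prems q_ge_3 have "1 \<le> b'" "b' < q ^ j" by (cases b', auto)
    then show ?thesis using Suc.IH Suc.prems b q_ge_3 by simp
  qed
qed

text \<open>Duplication formula: \<open>\<psi>\<^sub>\<gamma>(a/2Q) = 2 \<psi>\<^sub>\<gamma>(a/Q) - 2 log 2 - \<psi>\<^sub>\<gamma>((a + Q)/2Q)\<close>, where \<open>a + Q\<close> is even.\<close>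
lemma odd_half_fraction_in:
  assumes a: "odd a" "a < q ^ m"
  shows "psi_gamma (real a / real (2 * q ^ m)) \<in> V"
proof -
  define Q where "Q = q ^ m"
  have Q_pos: "Q > 0" unfolding Q_def using q_ge_3 by simp
  obtain k where k: "a + Q = 2 * k" using a odd_q_power[of m] unfolding Q_def by (metis odd_add evenE)
  have k_bounds: "1 \<le> k" "k < Q" using k a Q_pos unfolding Q_def by auto
  define r where "r = real a / real (2 * Q)"
  have r_pos: "r > 0" unfolding r_def using a Q_pos by (cases a) auto
  have "r + 1/2 = real k / real Q"
  proof -
    have "real a + real Q = 2 * real k" using k by (metis of_nat_add of_nat_mult of_nat_numeral)
    then show ?thesis unfolding r_def using Q_pos by (simp add: field_simps)
  qed
  then have "psi_gamma r = 2 * psi_gamma (real a / real Q) - 2 * of_real (ln 2) - psi_gamma (real k / real Q)"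
    using psi_gamma_multiplication[OF r_pos, of 2] Q_pos
    unfolding r_def by (simp add: numeral_2_eq_2 algebra_simps)
  moreover have "1 \<le> a" using a(1) by (cases a) auto
  then have "psi_gamma (real a / real Q) \<in> V" "psi_gamma (real k / real Q) \<in> V"
    using fraction_in a k_bounds unfolding Q_def by simp_all
  then have "2 * psi_gamma (real a / real Q) - 2 * of_real (ln 2) - psi_gamma (real k / real Q) \<in> V"
    by (intro diff_in Rats_mult_in ln_2_in) auto
  ultimately show ?thesis unfolding r_def Q_def by simp
qed

lemma half_fraction_in:
  assumes a: "1 \<le> a" "a < 2 * q ^ m"
  shows "psi_gamma (real a / real (2 * q ^ m)) \<in> V"
proof (cases "even a")
  case True
  then obtain a' where "a = 2 * a'" by auto
  moreover have "psi_gamma (real a' / real (q ^ m)) \<in> V" using fraction_in a \<open>a = 2 * a'\<close> by simp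
  ultimately show ?thesis by simp
next
  case odd: False
  consider "a = q ^ m" | "a < q ^ m" | "a > q ^ m" by linarith
  then show ?thesis
  proof cases
    case 1
    then have "psi_gamma (real a / real (2 * q ^ m)) = (-2) * of_real (ln 2)"
      using q_ge_3 by (simp add: psi_gamma_one_half)
    then show ?thesis using Rats_mult_in[OF _ ln_2_in, of "-2"] by simp
  next
    case 2
    then show ?thesis using odd_half_fraction_in odd by simp
  next
    case 3
    define a' where "a' = 2 * q ^ m - a"
    have a': "odd a'" "a' < q ^ m" "0 < a'" "a' < 2 * q ^ m" "a = 2 * q ^ m - a'"
      using odd 3 a unfolding a'_def by auto
    show ?thesis
      using reflection_in[OF a'(3,4) denom_dvd_N odd_half_fraction_in[OF a'(1,2)]] by (simp add: a'(5))
  qed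
qed

lemma harm_in:
  assumes e: "e \<in> {0, 1}" and a: "1 \<le> a" "a \<le> 2 ^ e * q ^ m - 1"
  shows "harm (of_nat a / of_nat (2 ^ e * q ^ m)) \<in> V"
proof -
  define D where "D = 2 ^ e * q ^ m"
  have D_pos: "D > 0" unfolding D_def using q_ge_3 by simp
  have "psi_gamma (real a / real D) \<in> V"
    using e fraction_in[of m a] half_fraction_in[of a] a D_pos unfolding D_def by auto
  moreover have "harm (of_nat a / of_nat D) = psi_gamma (real a / real D) + of_nat D / of_nat a"
    using harm_eq_psi_gamma[of "real a / real D"] a D_pos by simp
  moreover have "of_nat D / of_nat a \<in> V" by (intro Rats_in) simp
  ultimately show ?thesis unfolding D_def[symmetric] by (simp only: add_in)
qed

end

section \<open>Spans over \<open>\<rat>(\<zeta>\<^sub>N)\<close> and linear independence over \<open>\<overline>\<rat>\<close>\<close>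

definition cyclotomic_span :: "nat \<Rightarrow> complex set \<Rightarrow> complex set" where
  "cyclotomic_span N T = {x. \<exists>c. (\<forall>t\<in>T. c t \<in> cyclotomic_field N) \<and> x = (\<Sum>t\<in>T. c t * t)}"

lemma cyclotomic_span_add:
  "x \<in> cyclotomic_span N T \<Longrightarrow> y \<in> cyclotomic_span N T \<Longrightarrow> x + y \<in> cyclotomic_span N T"
proof -
  assume "x \<in> cyclotomic_span N T" "y \<in> cyclotomic_span N T"
  then obtain c d where "\<forall>t\<in>T. c t \<in> cyclotomic_field N" "x = (\<Sum>t\<in>T. c t * t)"
     "\<forall>t\<in>T. d t \<in> cyclotomic_field N" "y = (\<Sum>t\<in>T. d t * t)" unfolding cyclotomic_span_def by auto
  then show ?thesis unfolding cyclotomic_span_def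
    by (intro CollectI exI[of _ "\<lambda>t. c t + d t"])
      (auto simp: sum.distrib algebra_simps intro: cyclotomic_field_add)
qed

lemma cyclotomic_span_mult:
  "N > 0 \<Longrightarrow> k \<in> cyclotomic_field N \<Longrightarrow> x \<in> cyclotomic_span N T \<Longrightarrow> k * x \<in> cyclotomic_span N T"
proof -
  assume k: "N > 0" "k \<in> cyclotomic_field N" "x \<in> cyclotomic_span N T"
  then obtain c where "\<forall>t\<in>T. c t \<in> cyclotomic_field N" "x = (\<Sum>t\<in>T. c t * t)"
    unfolding cyclotomic_span_def by auto
  then show ?thesis unfolding cyclotomic_span_def using k
    by (intro CollectI exI[of _ "\<lambda>t. k * c t"])
      (auto simp: sum_distrib_left algebra_simps intro: cyclotomic_field_mult)
qed

lemma cyclotomic_span_base: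
  assumes "finite T" "t \<in> T" "N > 0" shows "t \<in> cyclotomic_span N T"
proof -
  have delta: "(\<lambda>s. (if s = t then 1 else 0) * s) = (\<lambda>s. if s = t then s else 0)"
    by auto
  have "(\<Sum>s\<in>T. (if s = t then 1 else 0) * s) = t"
    unfolding delta using assms by (simp add: sum.delta')
  then show ?thesis unfolding cyclotomic_span_def using assms
    by (intro CollectI exI[of _ "\<lambda>s. if s = t then 1 else 0"])
      (auto intro: zero_in_cyclotomic_field Rats_in_cyclotomic_field)
qed

text \<open>
  Each element of \<open>S\<close> has coordinates in \<open>\<rat>(\<zeta>\<^sub>N)\<close> with respect to \<open>T\<close>; if \<open>|T| < |S|\<close>
  these coordinate vectors satisfy a nontrivial \<open>\<rat>(\<zeta>\<^sub>N)\<close>-linear relation, whose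
  coefficients are algebraic.
\<close>
lemma card_le_if_alg_lin_indep_subset_cyclotomic_span:
  assumes T: "finite T" and N: "N > 0" and S: "S \<subseteq> cyclotomic_span N T" and indep: "alg_lin_indep S"
  shows "card S \<le> card T"
proof (rule ccontr)
  assume "\<not> card S \<le> card T"
  then have card_lt: "card T < card S" by simp
  have fin_S: "finite S" using indep unfolding alg_lin_indep_def by simp
  have "\<forall>s\<in>S. \<exists>c. (\<forall>t\<in>T. c t \<in> cyclotomic_field N) \<and> s = (\<Sum>t\<in>T. c t * t)"
    using S unfolding cyclotomic_span_def by blast
  then obtain A where A: "\<And>s t. s \<in> S \<Longrightarrow> t \<in> T \<Longrightarrow> A s t \<in> cyclotomic_field N"
      "\<And>s. s \<in> S \<Longrightarrow> s = (\<Sum>t\<in>T. A s t * t)" by metis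
  have "\<exists>c. (\<forall>s\<in>S. c s \<in> cyclotomic_field N) \<and> (\<exists>s\<in>S. c s \<noteq> 0) \<and>
      (\<forall>t\<in>T. (\<Sum>s\<in>S. A s t * c s) = 0)"
    by (rule homogeneous_system_nontrivial_solution[where P = "\<lambda>x. x \<in> cyclotomic_field N"])
      (auto intro: zero_in_cyclotomic_field Rats_in_cyclotomic_field cyclotomic_field_add
        cyclotomic_field_mult cyclotomic_field_uminus N T fin_S card_lt A(1))
  then obtain c where c: "\<And>s. s \<in> S \<Longrightarrow> c s \<in> cyclotomic_field N" "\<exists>s\<in>S. c s \<noteq> 0"
     "\<And>t. t \<in> T \<Longrightarrow> (\<Sum>s\<in>S. A s t * c s) = 0" by blast
  have "(\<Sum>s\<in>S. c s * s) = (\<Sum>s\<in>S. \<Sum>t\<in>T. c s * A s t * t)"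
    by (intro sum.cong refl) (subst A(2), auto simp: sum_distrib_left mult.assoc)
  also have "\<dots> = (\<Sum>t\<in>T. \<Sum>s\<in>S. c s * A s t * t)" by (rule sum.swap)
  also have "\<dots> = (\<Sum>t\<in>T. (\<Sum>s\<in>S. A s t * c s) * t)"
    unfolding sum_distrib_right by (simp add: mult_ac)
  also have "\<dots> = 0" using c(3) by simp
  finally have "(\<Sum>s\<in>S. c s * s) = 0" .
  moreover have "\<forall>s\<in>S. algebraic (c s)" using c(1) algebraic_if_in_cyclotomic_field[OF N] by blast
  ultimately have "\<forall>s\<in>S. c s = 0" using indep unfolding alg_lin_indep_def by blast
  with c(2) show False by blast
qed

section \<open>Counting the spanning set\<close>

lemma totient_ge_twice_card_lower_half:
  "2 * card {a. 1 \<le> a \<and> 2 * a < n \<and> coprime a n} \<le> totient n"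
proof -
  define L where "L = {a. 1 \<le> a \<and> 2 * a < n \<and> coprime a n}"
  have fin_L: "finite L" unfolding L_def by (rule finite_subset[of _ "{..<n}"]) auto
  have coprime_reflect: "coprime (n - a) n" if "a \<in> L" for a
    using that gcd_diff2_nat[of a n] unfolding L_def coprime_iff_gcd_eq_1 by auto
  have "L \<union> (\<lambda>a. n - a) ` L \<subseteq> totatives n"
    using coprime_reflect unfolding L_def totatives_def by auto
  moreover have "L \<inter> (\<lambda>a. n - a) ` L = {}" "inj_on (\<lambda>a. n - a) L"
    unfolding L_def inj_on_def by auto
  ultimately have "2 * card L \<le> card (totatives n)"
    using fin_L card_mono[of "totatives n" "L \<union> (\<lambda>a. n - a) ` L"]
    by (simp add: card_Un_disjoint card_image)
  then show ?thesis unfolding L_def totient_def .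
qed

definition psi_gamma_generators :: "nat set \<Rightarrow> (nat \<Rightarrow> nat) \<Rightarrow> complex set" where
  "psi_gamma_generators J m = {1, of_real pi, of_real (ln 2)} \<union>
     (\<Union>q\<in>J. (\<lambda>a. psi_gamma (real a / real (q ^ m q))) ` {a. 1 \<le> a \<and> 2 * a < q ^ m q \<and> coprime a q})"

lemma finite_psi_gamma_generators:
  assumes "finite J" shows "finite (psi_gamma_generators J m)"
proof -
  have "finite {a. 1 \<le> a \<and> 2 * a < q ^ m q \<and> coprime a q}" for q
    by (rule finite_subset[of _ "{..<q ^ m q}"]) auto
  then show ?thesis
    unfolding psi_gamma_generators_def by (intro finite_UnI finite_UN_I finite_imageI assms) simp_all
qed

lemma card_psi_gamma_generators:
  assumes "finite J" "\<forall>q\<in>J. prime q"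
  shows "real (card (psi_gamma_generators J m)) \<le> (\<Sum>q\<in>J. real (totient (q ^ m q)) / 2) + 3"
proof -
  define L where "L q = {a. 1 \<le> a \<and> 2 * a < q ^ m q \<and> coprime a q}" for q
  have fin_L: "finite (L q)" for q
    unfolding L_def by (rule finite_subset[of _ "{..<q ^ m q}"]) auto
  have card_L: "2 * card (L q) \<le> totient (q ^ m q)" for q
  proof (cases "m q = 0")
    case False
    then have "L q = {a. 1 \<le> a \<and> 2 * a < q ^ m q \<and> coprime a (q ^ m q)}"
      unfolding L_def by simp
    then show ?thesis using totient_ge_twice_card_lower_half[of "q ^ m q"] by simp
  next
    case True
    then have "L q = {}" unfolding L_def by auto
    then show ?thesis by simp
  qed
  have "card (psi_gamma_generators J m) \<le>
      card {1, of_real pi, of_real (ln 2) :: complex} +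
      card (\<Union>q\<in>J. (\<lambda>a. psi_gamma (real a / real (q ^ m q))) ` L q)"
    unfolding psi_gamma_generators_def L_def by (rule card_Un_le)
  also have "card {1, of_real pi, of_real (ln 2) :: complex} \<le> 3"
    by (simp add: card_insert_le_m1)
  also have "card (\<Union>q\<in>J. (\<lambda>a. psi_gamma (real a / real (q ^ m q))) ` L q) \<le>
      (\<Sum>q\<in>J. card ((\<lambda>a. psi_gamma (real a / real (q ^ m q))) ` L q))"
    by (rule card_UN_le[OF assms(1)])
  also have "\<dots> \<le> (\<Sum>q\<in>J. card (L q))"
    by (rule sum_mono) (rule card_image_le[OF fin_L])
  finally have "card (psi_gamma_generators J m) \<le> 3 + (\<Sum>q\<in>J. card (L q))"
    by simp
  then have "real (card (psi_gamma_generators J m)) \<le> real (3 + (\<Sum>q\<in>J. card (L q)))"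
    by (rule of_nat_mono)
  also have "\<dots> = 3 + (\<Sum>q\<in>J. real (card (L q)))" by simp
  also have "\<dots> \<le> 3 + (\<Sum>q\<in>J. real (totient (q ^ m q)) / 2)"
  proof (intro add_left_mono sum_mono)
    fix q
    have "real (2 * card (L q)) \<le> real (totient (q ^ m q))" by (rule of_nat_mono[OF card_L])
    then show "real (card (L q)) \<le> real (totient (q ^ m q)) / 2" by simp
  qed
  finally show ?thesis by simp
qed

lemma harm_values_subset_cyclotomic_span:
  fixes m e :: "nat \<Rightarrow> nat"
  assumes J: "finite J" "\<forall>q\<in>J. prime q \<and> odd q" and e: "\<forall>q\<in>J. e q \<in> {0, 1}"
  defines "N \<equiv> 4 * (\<Prod>q\<in>J. q ^ m q)"
  shows "{harm 1} \<union> {harm (of_nat a / of_nat (2 ^ e q * q ^ m q)) | q a.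
           q \<in> J \<and> 1 \<le> a \<and> a \<le> 2 ^ e q * q ^ m q - 1}
         \<subseteq> cyclotomic_span N (psi_gamma_generators J m)"
    (is "_ \<subseteq> ?V")
proof -
  have N_pos: "N > 0" unfolding N_def using J by (simp add: prod_pos prime_gt_0_nat)
  have fin: "finite (psi_gamma_generators J m)" by (rule finite_psi_gamma_generators[OF J(1)])
  have generator_in: "t \<in> ?V" if "t \<in> psi_gamma_generators J m" for t
    using fin that N_pos by (rule cyclotomic_span_base)
  have basics: "1 \<in> ?V" "complex_of_real pi \<in> ?V" "complex_of_real (ln 2) \<in> ?V"
    by (rule generator_in, simp add: psi_gamma_generators_def)+
  have closed: "psi_gamma_closed N q (m q) ?V" if q: "q \<in> J" for q
  proof
    have "q ^ m q dvd (\<Prod>q\<in>J. q ^ m q)" by (rule dvd_prodI[OF J(1) q])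
    then show "2 * q ^ m q dvd N" unfolding N_def by (rule mult_dvd_mono[of 2 4, rotated]) simp
    show "prime q" "odd q" using J(2) q by auto
    show "x + y \<in> ?V" if "x \<in> ?V" "y \<in> ?V" for x y using that by (rule cyclotomic_span_add)
    show "c * x \<in> ?V" if "c \<in> cyclotomic_field N" "x \<in> ?V" for c x
      using N_pos that by (rule cyclotomic_span_mult)
    show "psi_gamma (real a / real (q ^ m q)) \<in> ?V"
      if "1 \<le> a" "2 * a < q ^ m q" "coprime a q" for a
      using that q by (intro generator_in) (auto simp: psi_gamma_generators_def)
  qed (use N_pos basics in \<open>simp_all add: N_def\<close>)
  have "harm 1 \<in> ?V"
    using harm_eq_psi_gamma[of 1] psi_gamma_1 basics(1) by simp
  moreover have "harm (of_nat a / of_nat (2 ^ e q * q ^ m q)) \<in> ?V"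
    if "q \<in> J" "1 \<le> a" "a \<le> 2 ^ e q * q ^ m q - 1" for q a
    using psi_gamma_closed.harm_in[OF closed[OF that(1)]] e that by auto
  ultimately show ?thesis by blast
qed

theorem theorem3p10:
  fixes J :: "nat set" and m e :: "nat \<Rightarrow> nat"
  assumes "finite J"
    and "\<forall>q\<in>J. prime q \<and> odd q"
    and "3 \<notin> J"
    and "\<forall>q\<in>J. e q \<in> {0, 1}"
  shows "\<forall>S. S \<subseteq> {harm 1} \<union>
              {harm (of_nat a / of_nat (2 ^ e q * q ^ m q)) | q a.
                 q \<in> J \<and> 1 \<le> a \<and> a \<le> 2 ^ e q * q ^ m q - 1}
            \<longrightarrow> alg_lin_indep S
            \<longrightarrow> real (card S) \<le> (\<Sum>q\<in>J. real (totient (q ^ m q)) / 2) + 3"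
proof (intro allI impI)
  fix S
  assume S: "S \<subseteq> {harm 1} \<union>
              {harm (of_nat a / of_nat (2 ^ e q * q ^ m q)) | q a.
                 q \<in> J \<and> 1 \<le> a \<and> a \<le> 2 ^ e q * q ^ m q - 1}"
    and indep: "alg_lin_indep S"
  define N where "N = 4 * (\<Prod>q\<in>J. q ^ m q)"
  have "N > 0" unfolding N_def using assms(1,2) by (simp add: prod_pos prime_gt_0_nat)
  moreover have "S \<subseteq> cyclotomic_span N (psi_gamma_generators J m)"
    using S harm_values_subset_cyclotomic_span[OF assms(1,2,4)] unfolding N_def by blast
  ultimately have "real (card S) \<le> real (card (psi_gamma_generators J m))"
    using card_le_if_alg_lin_indep_subset_cyclotomic_span finite_psi_gamma_generators[OF assms(1)]
      indep by simp
  also have "\<dots> \<le> (\<Sum>q\<in>J. real (totient (q ^ m q)) / 2) + 3"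
    using card_psi_gamma_generators assms(1,2) by blast
  finally show "real (card S) \<le> (\<Sum>q\<in>J. real (totient (q ^ m q)) / 2) + 3" by simp
qed

end
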